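(* Let $K,F$ be non-negative integers. Then there exists at least one numerical semigroup $S$ with $\mathrm{F}(S)=F$ and $\mathrm{l}(S)=K$ if and only if $K+F$ is odd and $F\ge K+1$.
   Context: A numerical semigroup is a subset $S\subseteq\mathbb{N}$ closed under addition with $0\in S$ and $\mathbb{N}\setminus S$ finite; $\mathrm{F}(S)=\max(\mathbb{Z}\setminus S)$. $\mathrm{N}(S)=\{s\in S\mid s<\mathrm{F}(S)\}$, $\mathrm{L}(S)=\{x\in\mathbb{N}\setminus S\mid \mathrm{F}(S)-x\notin \mathrm{N}(S)\}$, $\mathrm{l}(S)=\#\mathrm{L}(S)$. *)

theory Defs
  imports Main
begin

definition numerical_semigroup :: "nat set \<Rightarrow> bool" where
  "numerical_semigroup S \<longleftrightarrow> 0 \<in> S \<and> (\<forall>x\<in>S. \<forall>y\<in>S. x + y \<in> S) \<and> finite (UNIV - S)"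

definition frob :: "nat set \<Rightarrow> int" where
  "frob S = (GREATEST z::int. z \<notin> int ` S)"

definition Nset :: "nat set \<Rightarrow> nat set" where
  "Nset S = {s \<in> S. int s < frob S}"

definition Lset :: "nat set \<Rightarrow> nat set" where
  "Lset S = {x \<in> UNIV - S. frob S - int x \<notin> int ` Nset S}"

definition lnum :: "nat set \<Rightarrow> nat" where
  "lnum S = card (Lset S)"

end

theory Submission
  imports Defs
begin

text \<open>
  The nonzero elements s < F of S and their reflections F - s are disjoint sets of gaps in [1, F),
  since s + (F - s) = F is not in S; L(S) consists of exactly the remaining numbers of [1, F).
  Hence F - 1 = l(S) + 2 #{s \<in> S. 0 < s < F}, giving F \<ge> l(S) + 1 and the parity of l(S) + F.
  Conversely, for 2a = K + F + 1 the semigroup {0} \<union> [a, \<infinity>) - {F} has Frobenius number F and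
  L = (F - a, a), of size K.
\<close>

lemma frob_eqI:
  assumes "F \<notin> S" and "\<And>y. F < y \<Longrightarrow> y \<in> S"
  shows "frob S = int F"
  unfolding frob_def
proof (rule Greatest_equality)
  show "int F \<notin> int ` S" using assms(1) by auto
next
  fix z :: int assume "z \<notin> int ` S"
  then show "z \<le> int F"
    using assms(2) by (cases z rule: int_cases) (auto simp: not_le)
qed

lemma frob_UNIV: "frob UNIV = -1"
  unfolding frob_def
proof (rule Greatest_equality)
  fix z :: int assume "z \<notin> int ` UNIV"
  then show "z \<le> -1" by (cases z rule: int_cases) auto
qed auto

lemma frob_gap:
  assumes fin: "finite (UNIV - S)" and fr: "frob S = int F"
  shows frob_notin: "F \<notin> S" and frob_less_in: "\<And>y. F < y \<Longrightarrow> y \<in> S"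
proof -
  have ne: "UNIV - S \<noteq> {}"
  proof
    assume "UNIV - S = {}"
    then have "S = UNIV" by blast
    with fr show False using frob_UNIV by simp
  qed
  let ?m = "Max (UNIV - S)"
  have "?m \<notin> S" using Max_in[OF fin ne] by blast
  moreover have m_max: "\<And>y. ?m < y \<Longrightarrow> y \<in> S" using fin by (meson Diff_iff Max_ge UNIV_I not_le)
  ultimately have "frob S = int ?m" by (rule frob_eqI)
  then have "F = ?m" using fr by simp
  then show "F \<notin> S" "\<And>y. F < y \<Longrightarrow> y \<in> S" using \<open>?m \<notin> S\<close> m_max by auto
qed

lemma Lset_eq:
  assumes ns: "numerical_semigroup S" and fr: "frob S = int F"
  shows "Lset S = {x \<in> {1..<F}. x \<notin> S \<and> F - x \<notin> S}"
proof -
  have "0 \<in> S" and fin: "finite (UNIV - S)" using ns unfolding numerical_semigroup_def by auto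
  have Nset_reflect: "int F - int x \<in> int ` Nset S \<longleftrightarrow> x \<le> F \<and> 0 < x \<and> F - x \<in> S" for x
  proof
    assume "int F - int x \<in> int ` Nset S"
    then obtain s where "s \<in> S" "s < F" "int F - int x = int s" unfolding Nset_def fr by auto
    then have "x = F - s" "0 < x" by linarith+
    with \<open>s \<in> S\<close> \<open>s < F\<close> show "x \<le> F \<and> 0 < x \<and> F - x \<in> S" by simp
  next
    assume "x \<le> F \<and> 0 < x \<and> F - x \<in> S"
    then have mem: "F - x \<in> Nset S" and eq: "int F - int x = int (F - x)" unfolding Nset_def fr by auto
    show "int F - int x \<in> int ` Nset S" unfolding eq using mem by (rule imageI)
  qed
  have gap_bounds: "0 < x \<and> x \<le> F" if "x \<notin> S" for x
    using that \<open>0 \<in> S\<close> frob_less_in[OF fin fr] by (metis gr0I not_le)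
  show ?thesis
  proof (rule set_eqI)
    fix x
    show "x \<in> Lset S \<longleftrightarrow> x \<in> {x \<in> {1..<F}. x \<notin> S \<and> F - x \<notin> S}"
      unfolding Lset_def fr Nset_reflect using gap_bounds[of x] \<open>0 \<in> S\<close>
      by (cases "x = F") auto
  qed
qed

lemma frob_eq_lnum_add_double_card:
  assumes ns: "numerical_semigroup S" and fr: "frob S = int F"
  shows "F = lnum S + 2 * card {s \<in> {1..<F}. s \<in> S} + 1"
proof -
  have add: "\<And>x y. x \<in> S \<Longrightarrow> y \<in> S \<Longrightarrow> x + y \<in> S"
    and fin: "finite (UNIV - S)" and "0 \<in> S" using ns unfolding numerical_semigroup_def by auto
  have "F \<noteq> 0" using frob_notin[OF fin fr] \<open>0 \<in> S\<close> by metis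
  define L where "L = {x \<in> {1..<F}. x \<notin> S \<and> F - x \<notin> S}"
  define A where "A = {s \<in> {1..<F}. s \<in> S}"
  define B where "B = {x \<in> {1..<F}. F - x \<in> S}"
  have "A \<inter> B = {}"
  proof -
    have "x \<in> S \<Longrightarrow> F - x \<in> S \<Longrightarrow> x < F \<Longrightarrow> False" for x
      using add[of x "F - x"] frob_notin[OF fin fr] by simp
    then show ?thesis unfolding A_def B_def by auto
  qed
  moreover have "B = (\<lambda>x. F - x) ` A"
  proof (intro set_eqI iffI)
    fix x assume "x \<in> B"
    then have "F - x \<in> A" "x = F - (F - x)" unfolding A_def B_def by auto
    then show "x \<in> (\<lambda>x. F - x) ` A" by blast
  qed (auto simp: A_def B_def)
  moreover have "inj_on (\<lambda>x. F - x) A" unfolding A_def inj_on_def by auto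
  ultimately have "card B = card A" by (simp add: card_image)
  have "{1..<F} = L \<union> (A \<union> B)" "L \<inter> (A \<union> B) = {}"
    unfolding L_def A_def B_def by auto
  moreover have "finite L" "finite A" "finite B" unfolding L_def A_def B_def by auto
  ultimately have "card {1..<F} = card L + (card A + card B)"
    using \<open>A \<inter> B = {}\<close> by (simp add: card_Un_disjoint)
  then show ?thesis
    using \<open>F \<noteq> 0\<close> unfolding lnum_def Lset_eq[OF ns fr] L_def[symmetric] A_def \<open>card B = card A\<close>
    by simp
qed

definition gap_semigroup :: "nat \<Rightarrow> nat \<Rightarrow> nat set" where
  "gap_semigroup a F = insert 0 ({a..} - {F})"

lemma numerical_semigroup_gap_semigroup:
  assumes "F < a + a"
  shows "numerical_semigroup (gap_semigroup a F)"
proof -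
  have "UNIV - gap_semigroup a F \<subseteq> {..max a F}" unfolding gap_semigroup_def by auto
  then have "finite (UNIV - gap_semigroup a F)" by (rule finite_subset) simp
  moreover have "x + y \<in> gap_semigroup a F"
    if "x \<in> gap_semigroup a F" "y \<in> gap_semigroup a F" for x y
    using that assms unfolding gap_semigroup_def by auto
  ultimately show ?thesis unfolding numerical_semigroup_def gap_semigroup_def by blast
qed

lemma frob_gap_semigroup:
  assumes "0 < F" "a \<le> F"
  shows "frob (gap_semigroup a F) = int F"
  using assms by (intro frob_eqI) (auto simp: gap_semigroup_def)

lemma Lset_gap_semigroup:
  assumes "F < a + a" "a \<le> F"
  shows "Lset (gap_semigroup a F) = {F - a<..<a}"
proof -
  have "0 < F" using assms by simp
  show ?thesis
    unfolding Lset_eq[OF numerical_semigroup_gap_semigroup frob_gap_semigroup, OF assms(1) \<open>0 < F\<close> assms(2)]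
    using assms by (auto simp: gap_semigroup_def)
qed

theorem proposition37:
  fixes K F :: nat
  shows "(\<exists>S. numerical_semigroup S \<and> frob S = int F \<and> lnum S = K)
         \<longleftrightarrow> odd (K + F) \<and> F \<ge> K + 1"
proof
  assume "\<exists>S. numerical_semigroup S \<and> frob S = int F \<and> lnum S = K"
  then obtain S where "numerical_semigroup S" "frob S = int F" "lnum S = K" by blast
  then obtain c where F: "F = K + 2 * c + 1"
    using frob_eq_lnum_add_double_card by blast
  then have "K + F = 2 * (K + c) + 1" by simp
  then show "odd (K + F) \<and> F \<ge> K + 1" using F by simp
next
  assume h: "odd (K + F) \<and> F \<ge> K + 1"
  then obtain a where "K + F + 1 = 2 * a" by (metis dvd_def even_plus_one_iff)
  with h have a: "K + F + 1 = a + a" "a \<le> F" by linarith+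
  show "\<exists>S. numerical_semigroup S \<and> frob S = int F \<and> lnum S = K"
  proof (intro exI conjI)
    show "numerical_semigroup (gap_semigroup a F)" using a by (intro numerical_semigroup_gap_semigroup) simp
    show "frob (gap_semigroup a F) = int F" using a by (intro frob_gap_semigroup) simp_all
    show "lnum (gap_semigroup a F) = K" unfolding lnum_def using a by (subst Lset_gap_semigroup) simp_all
  qed
qed

end
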